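(* Let $k\geq 2$ and $n\geq k$ be integers. Then in $\mathcal{H}$, $$ z_1\,\tilde{\sqcup}\, \sum_{\substack{s_i\geq 1,\ s_1\geq 2\\ s_1+\cdots+s_{k-1}=n-1}}z_{s_1, \dots, s_{k-1}} = \sum_{\substack{t_i\geq 1,\ t_1=1,\ t_2\geq 2\\ t_1+\cdots+t_{k}=n}}z_{t_1,\dots, t_{k}}+ k \sum_{\substack{ t_i\geq 1,\ t_1\geq 2,\ t_k=1 \\ t_1+\cdots+t_{k}=n}} z_{t_1,\dots, t_{k}} + (k-1) \sum_{\substack{ t_i\geq 1,\ t_1, t_k\geq 2 \\ t_1+\cdots+t_{k}=n}} z_{t_1,\dots, t_{k}} $$ and $$ z_1\,\tilde{\sqcup} \sum_{\substack{ s_i\geq 1\\ s_1+\cdots+s_{k-1}=n-1}} z_{s_1, \dots, s_{k-1}}= k \sum_{\substack{ t_i\geq 1,\ t_k=1\\ t_1+\cdots+t_{k}=n}}z_{t_1,\dots, t_{k}} + (k-1) \sum_{\substack{ t_i\geq 1,\ t_k\geq 2 \\ t_1+\cdots+t_{k}=n }} z_{t_1,\dots, t_{k}}. $$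
   Context: Let $\mathcal{H}$ be the free $\mathbb{Z}$-module on words in letters $z_s$ ($s\geq1$), with $z_{s_1,\dots,s_k}:=z_{s_1}\cdots z_{s_k}$ and $1$ the empty word. Let $\mathbb{Z}\langle x_0,x_1\rangle$ be the free $\mathbb{Z}$-module on words in two letters $x_0,x_1$, with the shuffle product $\sqcup$ defined bilinearly and recursively by $1\sqcup u=u\sqcup 1=u$ and $(au)\sqcup(bv)=a(u\sqcup (bv))+b((au)\sqcup v)$ for letters $a,b\in\{x_0,x_1\}$ and words $u,v$. Let $\rho$ be the $\mathbb{Z}$-linear bijection from $\mathbb{Z}\oplus \mathbb{Z}\langle x_0,x_1\rangle x_1$ (span of $1$ and words ending in $x_1$) onto $\mathcal{H}$ given by $\rho(1)=1$ and $\rho(x_0^{s_1-1}x_1\cdots x_0^{s_k-1}x_1)=z_{s_1,\dots,s_k}$. Define the product $\tilde{\sqcup}$ on $\mathcal{H}$ by $w_1\,\tilde{\sqcup}\,w_2=\rho\big(\rho^{-1}(w_1)\sqcup\rho^{-1}(w_2)\big)$. Empty sums are zero. *)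

theory Defs
  imports Main
begin

text \<open>Elements of Z<x0,x1>: finitely supported functions bool list => int,
  where False encodes x0 and True encodes x1.
  Elements of H: finitely supported functions nat list => int, supported on
  words with all letters >= 1 (the word z_{s1..sk} is the list [s1,..,sk]).\<close>

type_synonym xword = "bool list"
type_synonym zelem = "nat list \<Rightarrow> int"
type_synonym xelem = "xword \<Rightarrow> int"

fun shw :: "xword \<Rightarrow> xword \<Rightarrow> xelem" where
  "shw [] v = (\<lambda>w. if w = v then 1 else 0)"
| "shw (a # u) [] = (\<lambda>w. if w = a # u then 1 else 0)"
| "shw (a # u) (b # v) = (\<lambda>w. case w of [] \<Rightarrow> 0
      | c # w' \<Rightarrow> (if c = a then shw u (b # v) w' else 0)
                 + (if c = b then shw (a # u) v w' else 0))"

definition shuffle :: "xelem \<Rightarrow> xelem \<Rightarrow> xelem" where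
  "shuffle f g = (\<lambda>w. \<Sum>u\<in>{u. f u \<noteq> 0}. \<Sum>v\<in>{v. g v \<noteq> 0}. f u * g v * shw u v w)"

definition enc :: "nat list \<Rightarrow> xword" where
  "enc s = concat (map (\<lambda>si. replicate (si - 1) False @ [True]) s)"

definition rho :: "xelem \<Rightarrow> zelem" where
  "rho F = (\<lambda>s. if (\<forall>x\<in>set s. 1 \<le> x) then F (enc s) else 0)"

definition rho_inv :: "zelem \<Rightarrow> xelem" where
  "rho_inv h = (\<lambda>u. \<Sum>s\<in>{s. h s \<noteq> 0}. if enc s = u then h s else 0)"

definition tshuffle :: "zelem \<Rightarrow> zelem \<Rightarrow> zelem" where
  "tshuffle h1 h2 = rho (shuffle (rho_inv h1) (rho_inv h2))"

definition zw :: "nat list \<Rightarrow> zelem" where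
  "zw s = (\<lambda>t. if t = s then 1 else 0)"

definition hadd :: "zelem \<Rightarrow> zelem \<Rightarrow> zelem" where
  "hadd f g = (\<lambda>t. f t + g t)"

definition hscale :: "int \<Rightarrow> zelem \<Rightarrow> zelem" where
  "hscale c f = (\<lambda>t. c * f t)"

definition hsum :: "nat list set \<Rightarrow> zelem" where
  "hsum S = (\<lambda>t. \<Sum>s\<in>S. zw s t)"

end

theory Submission
  imports Defs
begin

text \<open>Under rho inverse, z_1 is the single letter x_1, so the coefficient of z_t in the shuffle
  of z_1 with w counts the ways of deleting one x_1 from the encoding of t so that the result
  encodes a word in the support of w. Deleting the x_1 that closes block j < k merges t_j and
  t_(j+1) into the single entry t_j + t_(j+1) - 1; deleting the final x_1 leaves a word ending
  in x_1 only if t_k = 1, and then yields z_(t_1,...,t_(k-1)). Summed over all compositions of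
  n - 1 into k - 1 parts, each composition t of n into k parts therefore receives k - 1 from the
  merges plus one if t_k = 1. Under the extra condition s_1 >= 2, the merge at the first
  position counts iff t_1 + t_2 >= 3, while the other k - 2 merges and the final deletion count
  iff t_1 >= 2.\<close>

definition del_at :: "nat \<Rightarrow> 'a list \<Rightarrow> 'a list" where
  "del_at i w = take i w @ drop (Suc i) w"

lemma del_at_0 [simp]: "del_at 0 (c # w) = w"
  by (simp add: del_at_def)

lemma del_at_Suc [simp]: "del_at (Suc i) (c # w) = c # del_at i w"
  by (simp add: del_at_def)

lemma sum_lessThan_length_Cons:
  "(\<Sum>i<length (c # w). f i) = f 0 + (\<Sum>i<length w. f (Suc i))"
  by (simp only: length_Cons sum.lessThan_Suc_shift)

lemma shw_single_letter:
  "shw [a] v w = (\<Sum>i<length w. of_bool (w ! i = a \<and> del_at i w = v))"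
proof (induction v arbitrary: w)
  case Nil
  show ?case
  proof (cases w)
    case (Cons c w')
    then show ?thesis by (simp only: sum_lessThan_length_Cons) simp
  qed simp
next
  case (Cons b v)
  show ?case
  proof (cases w)
    case (Cons c w')
    then show ?thesis by (simp only: sum_lessThan_length_Cons) (auto simp: Cons.IH)
  qed simp
qed

definition x1_deletions :: "(xword \<Rightarrow> bool) \<Rightarrow> xword \<Rightarrow> int" where
  "x1_deletions P w = (\<Sum>i<length w. of_bool (w ! i \<and> P (del_at i w)))"

lemma x1_deletions_Nil [simp]: "x1_deletions P [] = 0"
  by (simp add: x1_deletions_def)

lemma x1_deletions_Cons:
  "x1_deletions P (c # w) = of_bool (c \<and> P w) + x1_deletions (\<lambda>x. P (c # x)) w"
  unfolding x1_deletions_def by (simp only: sum_lessThan_length_Cons) simp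

lemma x1_deletions_replicate_False:
  "x1_deletions P (replicate m False @ w) = x1_deletions (\<lambda>x. P (replicate m False @ x)) w"
  by (induction m arbitrary: P) (simp_all add: x1_deletions_Cons)

lemma enc_Nil [simp]: "enc [] = []"
  by (simp add: enc_def)

lemma enc_Cons [simp]: "enc (a # t) = replicate (a - 1) False @ True # enc t"
  by (simp add: enc_def)

lemma enc_eq_Nil_iff [simp]: "enc s = [] \<longleftrightarrow> s = []"
  by (cases s) simp_all

lemma last_enc: "s \<noteq> [] \<Longrightarrow> last (enc s)"
  by (induction s) auto

lemma replicate_False_True_eq_iff:
  "replicate m False @ True # x = replicate m' False @ True # y \<longleftrightarrow> m = m' \<and> x = y"
proof (induction m arbitrary: m')
  case 0
  then show ?case by (cases m') auto
next
  case (Suc m)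
  then show ?case by (cases m') auto
qed

lemma inj_on_enc: "inj_on enc {s. \<forall>x\<in>set s. 1 \<le> x}"
proof (rule inj_onI)
  fix s s'
  assume "s \<in> {s. \<forall>x\<in>set s. 1 \<le> x}" "s' \<in> {s. \<forall>x\<in>set s. 1 \<le> x}" "enc s = enc s'"
  then show "s = s'"
  proof (induction s arbitrary: s')
    case Nil
    then show ?case by (metis enc_eq_Nil_iff)
  next
    case (Cons a s)
    then obtain b s'' where s': "s' = b # s''"
      by (metis enc_eq_Nil_iff list.exhaust)
    with Cons.prems have "a - 1 = b - 1" "enc s = enc s''"
      by (simp_all add: replicate_False_True_eq_iff)
    moreover have "1 \<le> a" "1 \<le> b"
      using Cons.prems s' by simp_all
    moreover have "s = s''"
      using Cons s' \<open>enc s = enc s''\<close> by simp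
    ultimately show ?case
      using s' by simp
  qed
qed

definition contract :: "nat \<Rightarrow> nat list \<Rightarrow> nat list" where
  "contract j t = take j t @ (t ! j + t ! Suc j - 1) # drop (Suc (Suc j)) t"

lemma contract_0 [simp]: "contract 0 (a # b # t) = (a + b - 1) # t"
  by (simp add: contract_def)

lemma contract_Suc [simp]: "contract (Suc j) (a # t) = a # contract j t"
  by (simp add: contract_def)

lemma x1_deletions_enc:
  assumes "\<forall>x\<in>set t. 1 \<le> x"
  shows "x1_deletions P (enc t) = (\<Sum>j<length t - 1. of_bool (P (enc (contract j t))))
     + of_bool (t \<noteq> [] \<and> P (enc (butlast t) @ replicate (last t - 1) False))"
  using assms
proof (induction t arbitrary: P)
  case Nil
  then show ?case by simp
next
  case (Cons a t)
  have step: "x1_deletions P (enc (a # t)) = of_bool (P (replicate (a - 1) False @ enc t))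
      + ((\<Sum>j<length t - 1. of_bool (P (enc (a # contract j t))))
        + of_bool (t \<noteq> [] \<and> P (enc (a # butlast t) @ replicate (last t - 1) False)))"
    using Cons by (simp add: x1_deletions_replicate_False x1_deletions_Cons)
  show ?case
  proof (cases t)
    case Nil
    then show ?thesis
      using step by simp
  next
    case (Cons b t')
    have merge: "replicate (a - 1) False @ enc t = enc (contract 0 (a # t))"
      using Cons.prems \<open>t = b # t'\<close> by (simp add: replicate_add [symmetric])
    have split: "(\<Sum>j<length (a # t) - 1. of_bool (P (enc (contract j (a # t))))) =
       of_bool (P (enc (contract 0 (a # t))))
       + (\<Sum>j<length t - 1. of_bool (P (enc (a # contract j t))))"
      using \<open>t = b # t'\<close> by (simp only: length_Cons diff_Suc_1 sum.lessThan_Suc_shift) simp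
    show ?thesis
      unfolding step split merge using \<open>t = b # t'\<close> by simp
  qed
qed

lemma positive_contract:
  assumes "\<forall>x\<in>set t. 1 \<le> x" and "Suc j < length t"
  shows "\<forall>x\<in>set (contract j t). 1 \<le> x"
proof -
  have "1 \<le> t ! j" and "1 \<le> t ! Suc j"
    using assms by simp_all
  then have "1 \<le> t ! j + t ! Suc j - 1"
    by simp
  then show ?thesis
    using assms unfolding contract_def by (auto dest: in_set_takeD in_set_dropD)
qed

lemma enc_in_enc_image_iff:
  assumes "\<forall>s\<in>S. \<forall>x\<in>set s. 1 \<le> x" and "\<forall>x\<in>set t. 1 \<le> x"
  shows "enc t \<in> enc ` S \<longleftrightarrow> t \<in> S"
  using inj_on_image_mem_iff [OF inj_on_enc] assms by auto

lemma enc_append_zeros_in_enc_image_iff: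
  assumes "\<forall>s\<in>S. \<forall>x\<in>set s. 1 \<le> x" and "\<forall>x\<in>set t. 1 \<le> x" and "t \<noteq> []"
  shows "enc (butlast t) @ replicate (last t - 1) False \<in> enc ` S
    \<longleftrightarrow> last t = 1 \<and> butlast t \<in> S"
proof (cases "last t = 1")
  case True
  then show ?thesis
    using enc_in_enc_image_iff [OF assms(1), of "butlast t"] assms(2)
    by (simp add: in_set_butlastD)
next
  case False
  moreover have "1 \<le> last t"
    using assms(2,3) by simp
  ultimately have "2 \<le> last t"
    by simp
  have "enc s \<noteq> enc (butlast t) @ replicate (last t - 1) False" for s
  proof
    assume eq: "enc s = enc (butlast t) @ replicate (last t - 1) False"
    with \<open>2 \<le> last t\<close> have "s \<noteq> []"
      by auto
    then have "last (enc s)"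
      by (rule last_enc)
    with eq \<open>2 \<le> last t\<close> show False
      by simp
  qed
  then have "enc (butlast t) @ replicate (last t - 1) False \<notin> enc ` S"
    by (metis image_iff)
  with False show ?thesis
    by simp
qed

lemma hsum_apply: "finite S \<Longrightarrow> hsum S t = of_bool (t \<in> S)"
  unfolding hsum_def zw_def by simp

lemma rho_inv_zw: "rho_inv (zw r) = (\<lambda>u. of_bool (u = enc r))"
proof
  fix u
  have "{s. zw r s \<noteq> 0} = {r}"
    by (simp add: zw_def)
  then show "rho_inv (zw r) u = of_bool (u = enc r)"
    by (simp add: rho_inv_def zw_def)
qed

lemma rho_inv_hsum:
  assumes "finite S" and "inj_on enc S"
  shows "rho_inv (hsum S) = (\<lambda>u. of_bool (u \<in> enc ` S))"
proof
  fix u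
  have "{s. hsum S s \<noteq> 0} = S"
    by (simp add: hsum_apply [OF assms(1)])
  then have "rho_inv (hsum S) u = (\<Sum>s\<in>S. of_bool (enc s = u))"
    unfolding rho_inv_def by (auto intro: sum.cong simp: hsum_apply [OF assms(1)])
  also have "\<dots> = (\<Sum>v\<in>enc ` S. of_bool (v = u))"
    by (simp add: sum.reindex [OF assms(2)])
  also have "\<dots> = of_bool (u \<in> enc ` S)"
    using assms(1) by (simp add: of_bool_def)
  finally show "rho_inv (hsum S) u = of_bool (u \<in> enc ` S)" .
qed

lemma shuffle_letter_indicator:
  assumes "finite V"
  shows "shuffle (\<lambda>u. of_bool (u = [a])) (\<lambda>v. of_bool (v \<in> V)) w
    = (\<Sum>i<length w. of_bool (w ! i = a \<and> del_at i w \<in> V))"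
proof -
  have "shuffle (\<lambda>u. of_bool (u = [a])) (\<lambda>v. of_bool (v \<in> V)) w = (\<Sum>v\<in>V. shw [a] v w)"
    by (simp add: shuffle_def)
  also have "\<dots> = (\<Sum>i<length w. \<Sum>v\<in>V. of_bool (w ! i = a \<and> del_at i w = v))"
    by (simp only: shw_single_letter) (rule sum.swap)
  also have "\<dots> = (\<Sum>i<length w. of_bool (w ! i = a \<and> del_at i w \<in> V))"
  proof (rule sum.cong [OF refl])
    fix i
    show "(\<Sum>v\<in>V. of_bool (w ! i = a \<and> del_at i w = v))
        = (of_bool (w ! i = a \<and> del_at i w \<in> V) :: int)"
      using assms by (cases "w ! i = a") (simp_all add: of_bool_def)
  qed
  finally show ?thesis .
qed

lemma tshuffle_z1_hsum:
  assumes "finite S" and S_pos: "\<forall>s\<in>S. \<forall>x\<in>set s. 1 \<le> x" and t_pos: "\<forall>x\<in>set t. 1 \<le> x"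
  shows "tshuffle (zw [1]) (hsum S) t
    = (\<Sum>j<length t - 1. of_bool (contract j t \<in> S))
      + of_bool (t \<noteq> [] \<and> last t = 1 \<and> butlast t \<in> S)"
proof -
  have "inj_on enc S"
    using inj_on_enc by (rule inj_on_subset) (use S_pos in auto)
  then have "tshuffle (zw [1]) (hsum S) t = x1_deletions (\<lambda>x. x \<in> enc ` S) (enc t)"
    using assms by (simp add: tshuffle_def rho_def rho_inv_zw rho_inv_hsum
        shuffle_letter_indicator x1_deletions_def)
  also have "\<dots> = (\<Sum>j<length t - 1. of_bool (enc (contract j t) \<in> enc ` S))
     + of_bool (t \<noteq> [] \<and> enc (butlast t) @ replicate (last t - 1) False \<in> enc ` S)"
    by (rule x1_deletions_enc [OF t_pos])
  also have "(\<Sum>j<length t - 1. of_bool (enc (contract j t) \<in> enc ` S))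
      = (\<Sum>j<length t - 1. of_bool (contract j t \<in> S) :: int)"
  proof (rule sum.cong [OF refl])
    fix j assume "j \<in> {..<length t - 1}"
    then have "Suc j < length t"
      by simp
    then show "of_bool (enc (contract j t) \<in> enc ` S) = (of_bool (contract j t \<in> S) :: int)"
      by (simp add: enc_in_enc_image_iff [OF S_pos positive_contract [OF t_pos]])
  qed
  finally show ?thesis
    using enc_append_zeros_in_enc_image_iff [OF S_pos t_pos] by auto
qed

lemma tshuffle_nonpositive: "\<not> (\<forall>x\<in>set t. 1 \<le> x) \<Longrightarrow> tshuffle f g t = 0"
  unfolding tshuffle_def rho_def by auto

definition compositions :: "nat \<Rightarrow> nat \<Rightarrow> nat list set" where
  "compositions m N = {s. length s = m \<and> (\<forall>x\<in>set s. 1 \<le> x) \<and> sum_list s = N}"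

lemma compositions_positive: "\<forall>s\<in>compositions m N. \<forall>x\<in>set s. 1 \<le> x"
  by (simp add: compositions_def)

lemma finite_compositions: "finite (compositions m N)"
proof (rule finite_subset)
  show "compositions m N \<subseteq> {s. set s \<subseteq> {..N} \<and> length s = m}"
    by (auto simp: compositions_def dest: member_le_sum_list)
  show "finite {s. set s \<subseteq> {..N} \<and> length s = m}"
    by (rule finite_lists_length_eq) simp
qed

lemma hsum_subset_compositions: "S \<subseteq> compositions m N \<Longrightarrow> hsum S t = of_bool (t \<in> S)"
  by (meson finite_compositions finite_subset hsum_apply)

lemma length_contract: "Suc j < length t \<Longrightarrow> length (contract j t) = length t - 1"
  by (simp add: contract_def)

lemma sum_list_contract:
  "\<forall>x\<in>set t. 1 \<le> x \<Longrightarrow> Suc j < length t \<Longrightarrow> Suc (sum_list (contract j t)) = sum_list t"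
proof (induction t arbitrary: j)
  case Nil
  then show ?case by simp
next
  case (Cons a t)
  show ?case
  proof (cases j)
    case 0
    with Cons.prems obtain b t' where "t = b # t'"
      by (cases t) auto
    with Cons.prems 0 show ?thesis
      by simp
  next
    case (Suc j')
    with Cons show ?thesis
      by simp
  qed
qed

lemma nth_0_contract:
  "Suc j < length t \<Longrightarrow> contract j t ! 0 = (if j = 0 then t ! 0 + t ! 1 - 1 else t ! 0)"
  by (cases j) (simp_all add: contract_def nth_append)

lemma contract_in_compositions_iff:
  assumes "\<forall>x\<in>set t. 1 \<le> x" and "Suc j < length t"
  shows "contract j t \<in> compositions m N \<longleftrightarrow> length t = Suc m \<and> sum_list t = Suc N"
  using positive_contract [OF assms] length_contract [OF assms(2)] sum_list_contract [OF assms] assms(2)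
  by (auto simp: compositions_def)

lemma butlast_in_compositions_iff:
  assumes "\<forall>x\<in>set t. 1 \<le> x" and "t \<noteq> []" and "last t = 1"
  shows "butlast t \<in> compositions m N \<longleftrightarrow> length t = Suc m \<and> sum_list t = Suc N"
proof -
  have "sum_list t = Suc (sum_list (butlast t))"
    using assms(2,3) by (metis append_butlast_last_id sum_list_append sum_list_simps Suc_eq_plus1 add_0_right)
  then show ?thesis
    using assms by (auto simp: compositions_def in_set_butlastD)
qed

lemma last_eq_nth: "length t = Suc m \<Longrightarrow> last t = t ! m"
  by (cases "t = []") (simp_all add: last_conv_nth)

lemma sum_contract_in_compositions:
  assumes "\<forall>x\<in>set t. 1 \<le> x"
  shows "(\<Sum>j<length t - 1. of_bool (contract j t \<in> compositions m N))
    = of_bool (length t = Suc m \<and> sum_list t = Suc N) * (int m :: int)"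
proof -
  let ?L = "length t = Suc m \<and> sum_list t = Suc N"
  have "(\<Sum>j<length t - 1. of_bool (contract j t \<in> compositions m N))
      = (\<Sum>j<length t - 1. of_bool ?L :: int)"
    by (rule sum.cong [OF refl]) (simp add: contract_in_compositions_iff [OF assms])
  also have "\<dots> = of_bool ?L * int m"
    by (cases ?L) simp_all
  finally show ?thesis .
qed

lemma sum_contract_in_compositions_head_ge_2:
  assumes "\<forall>x\<in>set t. 1 \<le> x" and "0 < m"
  shows "(\<Sum>j<length t - 1. of_bool (contract j t \<in> {s \<in> compositions m N. 2 \<le> s ! 0}))
    = of_bool (length t = Suc m \<and> sum_list t = Suc N)
      * (of_bool (2 \<le> t ! 0 + t ! 1 - 1) + int (m - 1) * of_bool (2 \<le> t ! 0) :: int)"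
proof -
  let ?L = "length t = Suc m \<and> sum_list t = Suc N"
  have "(\<Sum>j<length t - 1. of_bool (contract j t \<in> {s \<in> compositions m N. 2 \<le> s ! 0}))
      = (\<Sum>j<length t - 1.
          of_bool ?L * of_bool (2 \<le> (if j = 0 then t ! 0 + t ! 1 - 1 else t ! 0)) :: int)"
    by (rule sum.cong [OF refl])
      (simp add: contract_in_compositions_iff [OF assms(1)] nth_0_contract of_bool_conj)
  also have "\<dots> = of_bool ?L * (of_bool (2 \<le> t ! 0 + t ! 1 - 1) + int (m - 1) * of_bool (2 \<le> t ! 0))"
  proof (cases ?L)
    case True
    then have "length t - 1 = Suc (m - 1)"
      using \<open>0 < m\<close> by simp
    then show ?thesis
      using True by (simp only: sum.lessThan_Suc_shift) simp
  next
    case False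
    then show ?thesis
      by (simp only: of_bool_eq(1) mult_zero_left sum.neutral_const)
  qed
  finally show ?thesis .
qed

lemma tshuffle_z1_compositions:
  "tshuffle (zw [1]) (hsum (compositions m N)) t
    = of_bool (t \<in> compositions (Suc m) (Suc N))
      * (int (Suc m) * of_bool (t ! m = 1) + int m * of_bool (2 \<le> t ! m))"
proof (cases "\<forall>x\<in>set t. 1 \<le> x")
  case False
  then show ?thesis
    by (simp add: tshuffle_nonpositive compositions_def)
next
  case t_pos: True
  let ?L = "length t = Suc m \<and> sum_list t = Suc N"
  have last_deletion:
    "(t \<noteq> [] \<and> last t = 1 \<and> butlast t \<in> compositions m N) \<longleftrightarrow> ?L \<and> t ! m = 1"
    using butlast_in_compositions_iff [OF t_pos] by (cases "t = []") (auto simp: last_eq_nth)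
  have coefficient: "tshuffle (zw [1]) (hsum (compositions m N)) t
      = of_bool ?L * int m + of_bool (?L \<and> t ! m = 1)"
    by (simp only: tshuffle_z1_hsum [OF finite_compositions compositions_positive t_pos]
        sum_contract_in_compositions [OF t_pos] last_deletion)
  show ?thesis
  proof (cases ?L)
    case True
    with t_pos have "1 \<le> t ! m" and "t \<in> compositions (Suc m) (Suc N)"
      by (simp_all add: compositions_def)
    with True show ?thesis
      unfolding coefficient by auto
  next
    case False
    then show ?thesis
      unfolding coefficient by (auto simp: compositions_def)
  qed
qed

lemma tshuffle_z1_compositions_head_ge_2:
  assumes "0 < m"
  shows "tshuffle (zw [1]) (hsum {s \<in> compositions m N. 2 \<le> s ! 0}) t
    = of_bool (t \<in> compositions (Suc m) (Suc N))
      * (of_bool (t ! 0 = 1 \<and> 2 \<le> t ! 1) + int (Suc m) * of_bool (2 \<le> t ! 0 \<and> t ! m = 1)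
         + int m * of_bool (2 \<le> t ! 0 \<and> 2 \<le> t ! m))"
proof (cases "\<forall>x\<in>set t. 1 \<le> x")
  case False
  then show ?thesis
    by (simp add: tshuffle_nonpositive compositions_def)
next
  case t_pos: True
  let ?L = "length t = Suc m \<and> sum_list t = Suc N"
  let ?S = "{s \<in> compositions m N. 2 \<le> s ! 0}"
  have "?L \<Longrightarrow> butlast t ! 0 = t ! 0"
    using \<open>0 < m\<close> by (simp add: nth_butlast)
  then have last_deletion:
    "(t \<noteq> [] \<and> last t = 1 \<and> butlast t \<in> ?S) \<longleftrightarrow> ?L \<and> t ! m = 1 \<and> 2 \<le> t ! 0"
    using butlast_in_compositions_iff [OF t_pos] by (cases "t = []") (auto simp: last_eq_nth)
  have S_fin: "finite ?S" and S_pos: "\<forall>s\<in>?S. \<forall>x\<in>set s. 1 \<le> x"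
    using finite_compositions compositions_positive by auto
  have coefficient: "tshuffle (zw [1]) (hsum ?S) t
      = of_bool ?L * (of_bool (2 \<le> t ! 0 + t ! 1 - 1) + int (m - 1) * of_bool (2 \<le> t ! 0))
        + of_bool (?L \<and> t ! m = 1 \<and> 2 \<le> t ! 0)"
    by (simp only: tshuffle_z1_hsum [OF S_fin S_pos t_pos]
        sum_contract_in_compositions_head_ge_2 [OF t_pos \<open>0 < m\<close>] last_deletion)
  show ?thesis
  proof (cases ?L)
    case True
    then have "t \<noteq> []"
      by auto
    with True t_pos \<open>0 < m\<close> have "1 \<le> t ! 0" "1 \<le> t ! 1" "1 \<le> t ! m"
      by simp_all
    moreover have "t \<in> compositions (Suc m) (Suc N)"
      using True t_pos by (simp add: compositions_def)
    ultimately show ?thesis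
      unfolding coefficient using True \<open>0 < m\<close> by (cases "t ! 0 = 1") auto
  next
    case False
    then show ?thesis
      unfolding coefficient by (auto simp: compositions_def)
  qed
qed

theorem lemma4p2:
  fixes k n :: nat
  assumes "2 \<le> k" and "k \<le> n"
  shows "tshuffle (zw [1])
           (hsum {s. length s = k - 1 \<and> (\<forall>x\<in>set s. 1 \<le> x) \<and> 2 \<le> s ! 0
                     \<and> sum_list s = n - 1})
         = hadd (hsum {t. length t = k \<and> (\<forall>x\<in>set t. 1 \<le> x) \<and> t ! 0 = 1 \<and> 2 \<le> t ! 1
                        \<and> sum_list t = n})
           (hadd (hscale (int k) (hsum {t. length t = k \<and> (\<forall>x\<in>set t. 1 \<le> x) \<and> 2 \<le> t ! 0
                        \<and> t ! (k - 1) = 1 \<and> sum_list t = n}))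
                 (hscale (int k - 1) (hsum {t. length t = k \<and> (\<forall>x\<in>set t. 1 \<le> x) \<and> 2 \<le> t ! 0
                        \<and> 2 \<le> t ! (k - 1) \<and> sum_list t = n})))
       \<and> tshuffle (zw [1])
           (hsum {s. length s = k - 1 \<and> (\<forall>x\<in>set s. 1 \<le> x) \<and> sum_list s = n - 1})
         = hadd (hscale (int k) (hsum {t. length t = k \<and> (\<forall>x\<in>set t. 1 \<le> x)
                        \<and> t ! (k - 1) = 1 \<and> sum_list t = n}))
                (hscale (int k - 1) (hsum {t. length t = k \<and> (\<forall>x\<in>set t. 1 \<le> x)
                        \<and> 2 \<le> t ! (k - 1) \<and> sum_list t = n}))"
proof -
  obtain m N where k: "k = Suc m" and n: "n = Suc N" and "0 < m"
    using assms by (intro that [of "k - 1" "n - 1"]) auto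
  have S1: "{s. length s = k - 1 \<and> (\<forall>x\<in>set s. 1 \<le> x) \<and> 2 \<le> s ! 0 \<and> sum_list s = n - 1}
      = {s \<in> compositions m N. 2 \<le> s ! 0}"
    by (auto simp: k n compositions_def)
  have S2: "{s. length s = k - 1 \<and> (\<forall>x\<in>set s. 1 \<le> x) \<and> sum_list s = n - 1} = compositions m N"
    by (simp add: k n compositions_def)
  show ?thesis
    unfolding S1 S2 fun_eq_iff hadd_def hscale_def
      tshuffle_z1_compositions_head_ge_2 [OF \<open>0 < m\<close>] tshuffle_z1_compositions
    by (auto simp: hsum_subset_compositions [where m = k and N = n] Collect_mono_iff
        compositions_def k n algebra_simps of_bool_def)
qed

end
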